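(* Let $M_n=(Q,\Sigma,\Delta,Q_\alpha,F)$ be a simple NFA. Then the DFA $M_d=\mathrm{SubsetConstruction}(M_n)$ is minimal, i.e. no DFA with fewer states recognizes the same language as $M_d$.
   Context: An NFA is a tuple $M=(Q,\Sigma,\Delta,Q_\alpha,F)$ where $Q$ is a finite set of states, $\Sigma$ a finite alphabet, $\Delta:Q\times\Sigma\to\mathcal{P}(Q)$ the transition function, $Q_\alpha\subseteq Q$ the set of start states and $F\subseteq Q$ the set of accepting states. $\Delta$ is extended to strings by $\hat\Delta(q,\varepsilon)=\{q\}$ and $\hat\Delta(q,\sigma s)=\bigcup_{p\in\Delta(q,\sigma)}\hat\Delta(p,s)$ for $\sigma\in\Sigma$, $s\in\Sigma^*$. The language of a state $q$ is $\mathcal{L}(q)=\{s\in\Sigma^*:\hat\Delta(q,s)\cap F\neq\emptyset\}$, and for $Q'\subseteq Q$, $\mathcal{L}(Q')=\bigcup_{q\in Q'}\mathcal{L}(q)$; $M$ recognizes $\mathcal{L}(Q_\alpha)$. A state $q$ is accessible if $q\in\hat\Delta(q_\alpha,s)$ for some $q_\alpha\in Q_\alpha$ and $s\in\Sigma^*$. An NFA is called simple if all its states are accessible and the languages $\mathcal{L}(q)$, $q\in Q$, are non-empty and pairwise disjoint. $\mathrm{SubsetConstruction}(M)$ denotes the DFA obtained by the subset construction with inaccessible states removed: its states are the subsets of $Q$ of the form $\hat\delta(Q_\alpha,s)$, $s\in\Sigma^*$, where $\delta(Q',\sigma)=\bigcup_{q\in Q'}\Delta(q,\sigma)$ (extended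 to strings in the usual way); its start state is $Q_\alpha$, its transition function is $\delta$, and its accepting states are those subsets $Q'$ with $Q'\cap F\neq\emptyset$. It recognizes the same language as $M$. *)

theory Defs
  imports Main
begin

text \<open>An NFA (Q, Sigma, Delta, Q_alpha, F) and a (complete) DFA (S, Sigma, delta, s0, F).\<close>

type_synonym ('q,'a) nfa = "'q set \<times> 'a set \<times> ('q \<Rightarrow> 'a \<Rightarrow> 'q set) \<times> 'q set \<times> 'q set"
type_synonym ('s,'a) dfa = "'s set \<times> 'a set \<times> ('s \<Rightarrow> 'a \<Rightarrow> 's) \<times> 's \<times> 's set"

definition is_nfa :: "('q,'a) nfa \<Rightarrow> bool" where
  "is_nfa M = (case M of (Q, \<Sigma>, \<Delta>, Qa, F) \<Rightarrow>
     finite Q \<and> finite \<Sigma> \<and> (\<forall>q\<in>Q. \<forall>a\<in>\<Sigma>. \<Delta> q a \<subseteq> Q) \<and> Qa \<subseteq> Q \<and> F \<subseteq> Q)"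

fun nfa_hat :: "('q \<Rightarrow> 'a \<Rightarrow> 'q set) \<Rightarrow> 'q \<Rightarrow> 'a list \<Rightarrow> 'q set" where
  "nfa_hat \<Delta> q [] = {q}"
| "nfa_hat \<Delta> q (a # s) = (\<Union>p\<in>\<Delta> q a. nfa_hat \<Delta> p s)"

definition state_lang :: "('q,'a) nfa \<Rightarrow> 'q \<Rightarrow> 'a list set" where
  "state_lang M q = (case M of (Q, \<Sigma>, \<Delta>, Qa, F) \<Rightarrow>
     {s \<in> lists \<Sigma>. nfa_hat \<Delta> q s \<inter> F \<noteq> {}})"

definition nfa_lang :: "('q,'a) nfa \<Rightarrow> 'a list set" where
  "nfa_lang M = (case M of (Q, \<Sigma>, \<Delta>, Qa, F) \<Rightarrow> (\<Union>q\<in>Qa. state_lang M q))"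

definition accessible :: "('q,'a) nfa \<Rightarrow> 'q \<Rightarrow> bool" where
  "accessible M q = (case M of (Q, \<Sigma>, \<Delta>, Qa, F) \<Rightarrow>
     (\<exists>qa\<in>Qa. \<exists>s\<in>lists \<Sigma>. q \<in> nfa_hat \<Delta> qa s))"

definition simple_nfa :: "('q,'a) nfa \<Rightarrow> bool" where
  "simple_nfa M = (case M of (Q, \<Sigma>, \<Delta>, Qa, F) \<Rightarrow>
     is_nfa M \<and> (\<forall>q\<in>Q. accessible M q) \<and> (\<forall>q\<in>Q. state_lang M q \<noteq> {})
     \<and> (\<forall>p\<in>Q. \<forall>q\<in>Q. p \<noteq> q \<longrightarrow> state_lang M p \<inter> state_lang M q = {}))"

definition dfa_states :: "('s,'a) dfa \<Rightarrow> 's set" where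
  "dfa_states M = fst M"

definition dfa_alphabet :: "('s,'a) dfa \<Rightarrow> 'a set" where
  "dfa_alphabet M = fst (snd M)"

definition is_dfa :: "('s,'a) dfa \<Rightarrow> bool" where
  "is_dfa M = (case M of (S, \<Sigma>, \<delta>, s0, F) \<Rightarrow>
     finite S \<and> finite \<Sigma> \<and> s0 \<in> S \<and> F \<subseteq> S \<and> (\<forall>q\<in>S. \<forall>a\<in>\<Sigma>. \<delta> q a \<in> S))"

definition dfa_lang :: "('s,'a) dfa \<Rightarrow> 'a list set" where
  "dfa_lang M = (case M of (S, \<Sigma>, \<delta>, s0, F) \<Rightarrow> {w \<in> lists \<Sigma>. foldl \<delta> s0 w \<in> F})"

definition subset_delta :: "('q \<Rightarrow> 'a \<Rightarrow> 'q set) \<Rightarrow> 'q set \<Rightarrow> 'a \<Rightarrow> 'q set" where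
  "subset_delta \<Delta> Q' a = (\<Union>q\<in>Q'. \<Delta> q a)"

text \<open>Subset construction with inaccessible subsets removed.\<close>
definition SubsetConstruction :: "('q,'a) nfa \<Rightarrow> ('q set,'a) dfa" where
  "SubsetConstruction M = (case M of (Q, \<Sigma>, \<Delta>, Qa, F) \<Rightarrow>
     (let S = {foldl (subset_delta \<Delta>) Qa s | s. s \<in> lists \<Sigma>}
      in (S, \<Sigma>, subset_delta \<Delta>, Qa, {Q' \<in> S. Q' \<inter> F \<noteq> {}})))"

end

theory Submission
  imports Defs
begin

(* The proof is a Myhill-Nerode style counting argument in two halves.
   (1) A general lower bound for complete DFAs: if the words r x (x in X)
       are pairwise distinguishable with respect to the language of a DFA,
       i.e. some common suffix is accepted after one but not after the
       other, then they lead to pairwise distinct states, hence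
       card X <= number of states.
   (2) For a simple NFA the map A |-> L(A) = (UN q:A. L(q)) is injective on
       subsets of Q: the languages L(q) are non-empty and pairwise disjoint,
       so a state q in A - B contributes words lying in L(A) but not L(B).
       The state of the subset construction reached by w is exactly the set
       A with residual language w\L = L(A), so distinct reachable subsets,
       represented by words reaching them, are pairwise distinguishable.
   The theorem follows by applying (1) to any DFA for the same language,
   with X the set of states of the subset construction. *)

lemma foldl_subset_delta:
  "foldl (subset_delta \<Delta>) P w = (\<Union>q\<in>P. nfa_hat \<Delta> q w)"
  by (induction w arbitrary: P) (auto simp: subset_delta_def)

lemma nfa_hat_closed:
  assumes "\<forall>q\<in>Q. \<forall>a\<in>\<Sigma>. \<Delta> q a \<subseteq> Q" "q \<in> Q" "w \<in> lists \<Sigma>"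
  shows "nfa_hat \<Delta> q w \<subseteq> Q"
  using assms(2,3)
proof (induction w arbitrary: q)
  case (Cons a w)
  then have "\<Delta> q a \<subseteq> Q" using assms(1) by simp
  with Cons show ?case by auto
qed simp

lemma foldl_subset_delta_closed:
  assumes "\<forall>q\<in>Q. \<forall>a\<in>\<Sigma>. \<Delta> q a \<subseteq> Q" "P \<subseteq> Q" "w \<in> lists \<Sigma>"
  shows "foldl (subset_delta \<Delta>) P w \<subseteq> Q"
  using assms(2,3) nfa_hat_closed[OF assms(1)] unfolding foldl_subset_delta by blast

lemma SubsetConstruction_unfold:
  "SubsetConstruction (Q, \<Sigma>, \<Delta>, Qa, F) =
     ({foldl (subset_delta \<Delta>) Qa s | s. s \<in> lists \<Sigma>}, \<Sigma>, subset_delta \<Delta>, Qa,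
      {Q' \<in> {foldl (subset_delta \<Delta>) Qa s | s. s \<in> lists \<Sigma>}. Q' \<inter> F \<noteq> {}})"
  by (simp add: SubsetConstruction_def)

lemma SubsetConstruction_is_dfa:
  assumes "is_nfa (Q, \<Sigma>, \<Delta>, Qa, F)"
  shows "is_dfa (SubsetConstruction (Q, \<Sigma>, \<Delta>, Qa, F))"
proof -
  define S where "S = {foldl (subset_delta \<Delta>) Qa s | s. s \<in> lists \<Sigma>}"
  have closed: "\<forall>q\<in>Q. \<forall>a\<in>\<Sigma>. \<Delta> q a \<subseteq> Q" and "Qa \<subseteq> Q" "finite Q" "finite \<Sigma>"
    using assms by (auto simp: is_nfa_def)
  then have "S \<subseteq> Pow Q"
    using foldl_subset_delta_closed[OF closed \<open>Qa \<subseteq> Q\<close>] unfolding S_def by blast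
  then have "finite S" using \<open>finite Q\<close> finite_subset by blast
  moreover have "Qa \<in> S" unfolding S_def by (rule CollectI, rule exI[of _ "[]"]) simp
  moreover have "subset_delta \<Delta> P a \<in> S" if "P \<in> S" "a \<in> \<Sigma>" for P a
  proof -
    obtain s where "s \<in> lists \<Sigma>" "P = foldl (subset_delta \<Delta>) Qa s"
      using \<open>P \<in> S\<close> unfolding S_def by blast
    then show ?thesis unfolding S_def using \<open>a \<in> \<Sigma>\<close>
      by (intro CollectI exI[of _ "s @ [a]"]) auto
  qed
  moreover have "SubsetConstruction (Q, \<Sigma>, \<Delta>, Qa, F) = (S, \<Sigma>, subset_delta \<Delta>, Qa, {Q' \<in> S. Q' \<inter> F \<noteq> {}})"
    unfolding SubsetConstruction_unfold S_def ..
  ultimately show ?thesis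
    using \<open>finite \<Sigma>\<close> by (simp add: is_dfa_def)
qed

definition set_lang :: "('q,'a) nfa \<Rightarrow> 'q set \<Rightarrow> 'a list set" where
  "set_lang M A = (\<Union>q\<in>A. state_lang M q)"

lemma set_lang_iff:
  "z \<in> set_lang (Q, \<Sigma>, \<Delta>, Qa, F) A \<longleftrightarrow>
     z \<in> lists \<Sigma> \<and> foldl (subset_delta \<Delta>) A z \<inter> F \<noteq> {}"
  by (auto simp: set_lang_def state_lang_def foldl_subset_delta)

text \<open>In a simple NFA, distinct subsets of states have distinct languages:
  a state in A - B has a non-empty language, disjoint from L(B).\<close>
lemma simple_nfa_set_lang_inj:
  assumes simple: "simple_nfa M" and M: "M = (Q, \<Sigma>, \<Delta>, Qa, F)"
    and "A \<subseteq> Q" "B \<subseteq> Q" "set_lang M A = set_lang M B"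
  shows "A = B"
proof -
  have nonempty: "\<forall>q\<in>Q. state_lang M q \<noteq> {}"
    and disjoint: "\<forall>p\<in>Q. \<forall>q\<in>Q. p \<noteq> q \<longrightarrow> state_lang M p \<inter> state_lang M q = {}"
    using simple by (auto simp: M simple_nfa_def)
  have "A \<subseteq> B" if "A \<subseteq> Q" "B \<subseteq> Q" "set_lang M A = set_lang M B" for A B
  proof
    fix q assume "q \<in> A"
    then obtain w where w: "w \<in> state_lang M q" using nonempty \<open>A \<subseteq> Q\<close> by blast
    then have "w \<in> set_lang M B" using \<open>q \<in> A\<close> that(3) by (auto simp: set_lang_def)
    then obtain p where p: "p \<in> B" "w \<in> state_lang M p" by (auto simp: set_lang_def)
    show "q \<in> B"
    proof (rule ccontr)
      assume "q \<notin> B"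
      then have "state_lang M p \<inter> state_lang M q = {}"
        using disjoint p(1) \<open>q \<in> A\<close> that(1,2) by (metis subsetD)
      then show False using w p(2) by blast
    qed
  qed
  then show ?thesis using assms(3-5) by (metis subset_antisym)
qed

lemma dfa_foldl_closed:
  assumes "\<forall>q\<in>S. \<forall>a\<in>\<Sigma>. \<delta> q a \<in> S" "s \<in> S" "w \<in> lists \<Sigma>"
  shows "foldl \<delta> s w \<in> S"
  using assms(2,3) by (induction w arbitrary: s) (use assms(1) in auto)

definition distinguishable :: "'a set \<Rightarrow> 'a list set \<Rightarrow> 'a list \<Rightarrow> 'a list \<Rightarrow> bool" where
  "distinguishable \<Sigma> L u v = (\<exists>z\<in>lists \<Sigma>. (u @ z \<in> L) \<noteq> (v @ z \<in> L))"

text \<open>Myhill-Nerode lower bound: pairwise distinguishable words reach pairwise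
  distinct states of any DFA recognising the language, so there are at least as
  many states as words.\<close>
lemma dfa_card_lower_bound:
  assumes "is_dfa M'"
    and words: "\<forall>x\<in>X. r x \<in> lists (dfa_alphabet M')"
    and dist: "\<forall>x\<in>X. \<forall>y\<in>X. x \<noteq> y \<longrightarrow> distinguishable (dfa_alphabet M') (dfa_lang M') (r x) (r y)"
  shows "card X \<le> card (dfa_states M')"
proof -
  obtain S \<Sigma> \<delta> s0 F where M': "M' = (S, \<Sigma>, \<delta>, s0, F)" by (cases M') auto
  have "finite S" "s0 \<in> S" and closed: "\<forall>q\<in>S. \<forall>a\<in>\<Sigma>. \<delta> q a \<in> S"
    using \<open>is_dfa M'\<close> by (auto simp: M' is_dfa_def)
  define f where "f x = foldl \<delta> s0 (r x)" for x
  have "f ` X \<subseteq> S"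
    using words dfa_foldl_closed[OF closed \<open>s0 \<in> S\<close>] by (auto simp: f_def M' dfa_alphabet_def)
  moreover have "inj_on f X"
  proof (rule inj_onI, rule ccontr)
    fix x y assume "x \<in> X" "y \<in> X" "f x = f y" "x \<noteq> y"
    then have "distinguishable \<Sigma> (dfa_lang M') (r x) (r y)"
      using dist by (simp add: M' dfa_alphabet_def)
    then obtain z where "z \<in> lists \<Sigma>"
      and "(r x @ z \<in> dfa_lang M') \<noteq> (r y @ z \<in> dfa_lang M')"
      unfolding distinguishable_def by blast
    then show False
      using words \<open>x \<in> X\<close> \<open>y \<in> X\<close> \<open>f x = f y\<close>
      by (auto simp: M' dfa_lang_def dfa_alphabet_def f_def)
  qed
  ultimately show ?thesis
    using card_inj_on_le \<open>finite S\<close> by (fastforce simp: M' dfa_states_def)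
qed

text \<open>For a simple NFA, choosing for each state of the subset construction a
  word reaching it yields pairwise distinguishable words: the residual language
  of the word reaching A is L(A), and L is injective on subsets of Q.\<close>
lemma SubsetConstruction_distinguishable:
  assumes simple: "simple_nfa M"
  obtains r where
    "\<forall>P\<in>dfa_states (SubsetConstruction M). r P \<in> lists (dfa_alphabet (SubsetConstruction M))"
    "\<forall>P\<in>dfa_states (SubsetConstruction M). \<forall>P'\<in>dfa_states (SubsetConstruction M). P \<noteq> P' \<longrightarrow>
       distinguishable (dfa_alphabet (SubsetConstruction M)) (dfa_lang (SubsetConstruction M)) (r P) (r P')"
proof -
  obtain Q \<Sigma> \<Delta> Qa F where M: "M = (Q, \<Sigma>, \<Delta>, Qa, F)" by (cases M) auto
  define S where "S = {foldl (subset_delta \<Delta>) Qa s | s. s \<in> lists \<Sigma>}"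
  have SC: "SubsetConstruction M = (S, \<Sigma>, subset_delta \<Delta>, Qa, {Q' \<in> S. Q' \<inter> F \<noteq> {}})"
    by (simp add: M SubsetConstruction_unfold S_def)
  have closed: "\<forall>q\<in>Q. \<forall>a\<in>\<Sigma>. \<Delta> q a \<subseteq> Q" and "Qa \<subseteq> Q"
    using simple by (auto simp: M simple_nfa_def is_nfa_def)
  have S_sub: "P \<subseteq> Q" if "P \<in> S" for P
    using that foldl_subset_delta_closed[OF closed \<open>Qa \<subseteq> Q\<close>] unfolding S_def by blast
  define r where "r P = (SOME s. s \<in> lists \<Sigma> \<and> foldl (subset_delta \<Delta>) Qa s = P)" for P
  have r: "r P \<in> lists \<Sigma> \<and> foldl (subset_delta \<Delta>) Qa (r P) = P" if "P \<in> S" for P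
    unfolding r_def by (rule someI_ex) (use that S_def in blast)
  have residual: "r P @ z \<in> dfa_lang (SubsetConstruction M) \<longleftrightarrow> z \<in> set_lang M P"
    if "P \<in> S" for P z
  proof -
    have "foldl (subset_delta \<Delta>) Qa (r P @ z) \<in> S" if "z \<in> lists \<Sigma>"
      using r[OF \<open>P \<in> S\<close>] that unfolding S_def by (intro CollectI exI[of _ "r P @ z"]) auto
    then show ?thesis
      using r[OF that] unfolding SC dfa_lang_def by (auto simp: M set_lang_iff)
  qed
  have "distinguishable \<Sigma> (dfa_lang (SubsetConstruction M)) (r P) (r P')"
    if "P \<in> S" "P' \<in> S" "P \<noteq> P'" for P P'
  proof -
    have "set_lang M P \<noteq> set_lang M P'"
      using simple_nfa_set_lang_inj[OF simple M S_sub S_sub] that by blast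
    then obtain z where "(z \<in> set_lang M P) \<noteq> (z \<in> set_lang M P')" by blast
    moreover have "z \<in> lists \<Sigma>" if "z \<in> set_lang M A" for z A
      using that by (simp add: M set_lang_iff)
    ultimately show ?thesis
      unfolding distinguishable_def using residual[OF \<open>P \<in> S\<close>] residual[OF \<open>P' \<in> S\<close>] by blast
  qed
  with r show thesis
    by (intro that[of r]) (auto simp: SC dfa_states_def dfa_alphabet_def)
qed

theorem mainTheorem1:
  fixes M :: "('q,'a) nfa"
  assumes "simple_nfa M"
  shows "is_dfa (SubsetConstruction M) \<and>
    (\<forall>M' :: ('s,'a) dfa. is_dfa M' \<and> dfa_alphabet M' = dfa_alphabet (SubsetConstruction M)
        \<and> dfa_lang M' = dfa_lang (SubsetConstruction M)
        \<longrightarrow> card (dfa_states (SubsetConstruction M)) \<le> card (dfa_states M'))"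
proof (intro conjI allI impI)
  show "is_dfa (SubsetConstruction M)"
    using assms SubsetConstruction_is_dfa by (cases M) (auto simp: simple_nfa_def)
next
  fix M' :: "('s,'a) dfa"
  assume same: "is_dfa M' \<and> dfa_alphabet M' = dfa_alphabet (SubsetConstruction M)
        \<and> dfa_lang M' = dfa_lang (SubsetConstruction M)"
  obtain r where
    "\<forall>P\<in>dfa_states (SubsetConstruction M). r P \<in> lists (dfa_alphabet (SubsetConstruction M))"
    "\<forall>P\<in>dfa_states (SubsetConstruction M). \<forall>P'\<in>dfa_states (SubsetConstruction M). P \<noteq> P' \<longrightarrow>
       distinguishable (dfa_alphabet (SubsetConstruction M)) (dfa_lang (SubsetConstruction M)) (r P) (r P')"
    using SubsetConstruction_distinguishable[OF assms] by blast
  then show "card (dfa_states (SubsetConstruction M)) \<le> card (dfa_states M')"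
    using dfa_card_lower_bound[of M' _ r] same by simp
qed

end
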